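(* Let $(A,\mathit{Con},\mid\!\sim)$ be an abstract nonmonotonic system. For every $X\in\mathit{Con}$, $$\bigcap\{\widetilde{Y}\mid Y\in\mathit{Con},\ Y\subseteq X\subseteq\widetilde{Y}\}=\widetilde{X}.$$
   Context: An abstract nonmonotonic system is a triple $(A,\mathit{Con},\mid\!\sim)$ where $\mathit{Con}$ is a collection of finite subsets of $A$ and $\mid\!\sim\ \subseteq\mathit{Con}\times\mathit{Con}$, satisfying: (1) $X\subseteq Y\in\mathit{Con}\Rightarrow X\in\mathit{Con}$; (2) $a\in A\Rightarrow\{a\}\in\mathit{Con}$; (3) $X\mid\!\sim T\Rightarrow X\cup T\in\mathit{Con}$; (4) $Y\subseteq X\Rightarrow X\mid\!\sim Y$; (5) $X\mid\!\sim T$ and $T\cup X\mid\!\sim Y$ imply $X\mid\!\sim Y$; (6) $X\mid\!\sim Y$ and $X\mid\!\sim Z$ imply $X\mid\!\sim Y\cup Z$. For $X\in\mathit{Con}$, $\widetilde{X}:=\{t\in A\mid X\mid\!\sim\{t\}\}$. *)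

theory Defs
  imports Main
begin

definition ans :: "'a set \<Rightarrow> 'a set set \<Rightarrow> ('a set \<Rightarrow> 'a set \<Rightarrow> bool) \<Rightarrow> bool" where
  "ans A Con R \<longleftrightarrow>
     (\<forall>X\<in>Con. finite X \<and> X \<subseteq> A) \<and>
     (\<forall>X Y. X \<subseteq> Y \<and> Y \<in> Con \<longrightarrow> X \<in> Con) \<and>
     (\<forall>a\<in>A. {a} \<in> Con) \<and>
     (\<forall>X T. R X T \<longrightarrow> X \<in> Con \<and> T \<in> Con) \<and>
     (\<forall>X T. R X T \<longrightarrow> X \<union> T \<in> Con) \<and>
     (\<forall>X Y. X \<in> Con \<and> Y \<subseteq> X \<longrightarrow> R X Y) \<and>
     (\<forall>X T Y. R X T \<and> R (T \<union> X) Y \<longrightarrow> R X Y) \<and>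
     (\<forall>X Y Z. R X Y \<and> R X Z \<longrightarrow> R X (Y \<union> Z))"

definition tilde :: "'a set \<Rightarrow> ('a set \<Rightarrow> 'a set \<Rightarrow> bool) \<Rightarrow> 'a set \<Rightarrow> 'a set" where
  "tilde A R X = {t \<in> A. R X {t}}"

end

theory Submission
  imports Defs
begin

text \<open>If \<open>Y \<subseteq> X \<subseteq> tilde A R Y\<close>, then \<open>Y\<close> entails the finite set \<open>X\<close> (entailment is
  closed under finite unions), so cut turns every consequence of \<open>X \<union> Y = X\<close> into one of \<open>Y\<close>:
  \<open>tilde A R X \<subseteq> tilde A R Y\<close>. Reflexivity gives \<open>X \<subseteq> tilde A R X\<close>, so \<open>X\<close> itself is one of
  the \<open>Y\<close> and the intersection is attained.\<close>

lemma ans_Con_finite_subset: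
  assumes "ans A Con R" "X \<in> Con"
  shows "finite X" "X \<subseteq> A"
proof -
  have "\<forall>X\<in>Con. finite X \<and> X \<subseteq> A" using assms(1) unfolding ans_def by (elim conjE)
  then show "finite X" "X \<subseteq> A" using assms(2) by blast+
qed

lemma ans_reflexive:
  assumes "ans A Con R" "X \<in> Con" "Y \<subseteq> X"
  shows "R X Y"
proof -
  have "\<forall>X Y. X \<in> Con \<and> Y \<subseteq> X \<longrightarrow> R X Y" using assms(1) unfolding ans_def by (elim conjE)
  then show ?thesis using assms(2,3) by blast
qed

lemma ans_cut:
  assumes "ans A Con R" "R X T" "R (T \<union> X) Y"
  shows "R X Y"
proof -
  have "\<forall>X T Y. R X T \<and> R (T \<union> X) Y \<longrightarrow> R X Y" using assms(1) unfolding ans_def by (elim conjE)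
  then show ?thesis using assms(2,3) by blast
qed

lemma ans_union:
  assumes "ans A Con R" "R X Y" "R X Z"
  shows "R X (Y \<union> Z)"
proof -
  have "\<forall>X Y Z. R X Y \<and> R X Z \<longrightarrow> R X (Y \<union> Z)" using assms(1) unfolding ans_def by (elim conjE)
  then show ?thesis using assms(2,3) by blast
qed

lemma subset_tilde:
  assumes "ans A Con R" "X \<in> Con"
  shows "X \<subseteq> tilde A R X"
  using ans_Con_finite_subset(2)[OF assms] ans_reflexive[OF assms] unfolding tilde_def by auto

lemma entails_finite_subset_tilde:
  assumes "ans A Con R" "Y \<in> Con" "finite S" "S \<subseteq> tilde A R Y"
  shows "R Y S"
  using assms(3,4)
proof (induction S rule: finite_induct)
  case empty
  show ?case using ans_reflexive[OF assms(1,2)] by blast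
next
  case (insert t S)
  then have "R Y {t}" "R Y S" unfolding tilde_def by auto
  then show ?case using ans_union[OF assms(1)] by (metis insert_is_Un)
qed

lemma tilde_subset_if_between:
  assumes "ans A Con R" "X \<in> Con" "Y \<in> Con" "Y \<subseteq> X" "X \<subseteq> tilde A R Y"
  shows "tilde A R X \<subseteq> tilde A R Y"
proof
  fix t assume t: "t \<in> tilde A R X"
  have "R Y X"
    using entails_finite_subset_tilde[OF assms(1,3) ans_Con_finite_subset(1)[OF assms(1,2)] assms(5)] .
  moreover have "R (X \<union> Y) {t}"
    using t assms(4) unfolding tilde_def by (simp add: Un_absorb2)
  ultimately have "R Y {t}" using ans_cut[OF assms(1)] by blast
  then show "t \<in> tilde A R Y" using t unfolding tilde_def by simp
qed

theorem lemma2: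
  assumes "ans A Con R" and "X \<in> Con"
  shows "\<Inter> {tilde A R Y | Y. Y \<in> Con \<and> Y \<subseteq> X \<and> X \<subseteq> tilde A R Y} = tilde A R X"
proof (rule antisym)
  have "tilde A R X \<in> {tilde A R Y | Y. Y \<in> Con \<and> Y \<subseteq> X \<and> X \<subseteq> tilde A R Y}"
    using assms(2) subset_tilde[OF assms] by blast
  then show "\<Inter> {tilde A R Y | Y. Y \<in> Con \<and> Y \<subseteq> X \<and> X \<subseteq> tilde A R Y} \<subseteq> tilde A R X"
    by (rule Inter_lower)
  show "tilde A R X \<subseteq> \<Inter> {tilde A R Y | Y. Y \<in> Con \<and> Y \<subseteq> X \<and> X \<subseteq> tilde A R Y}"
    using tilde_subset_if_between[OF assms] by (auto intro!: Inter_greatest)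
qed

end
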